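(* For every $z\in\mathbb{C}$ with $|z|=1$ and every integer $k\ge2$, $$\mathbb{E}_{X\sim\mathcal{G}}\big[|\mathrm{Per}_z(X)|^{2k}\big]\le\mathbb{E}_{X\sim\mathcal{G}}\big[|\mathrm{Per}(X)|^{2k}\big].$$
   Context: For $z\in\mathbb{C}$ with $|z|=1$ and $X\in\mathbb{C}^{n\times n}$, $\mathrm{Per}_z(X)=\sum_{\sigma\in S_n} z^{\ell(\sigma)}\prod_{i=1}^n X_{i,\sigma(i)}$ with $\ell(\sigma)$ the inversion number; $\mathrm{Per}=\mathrm{Per}_1$. $\mathcal{G}$ denotes the distribution of $n\times n$ matrices with i.i.d. standard complex Gaussian entries $\mathcal{N}_{\mathbb{C}}(0,1)$. *)

theory Defs
  imports "HOL-Probability.Probability" "HOL-Combinatorics.Permutations"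
begin

definition inv_num :: "nat \<Rightarrow> (nat \<Rightarrow> nat) \<Rightarrow> nat" where
  "inv_num n \<sigma> = card {(i, j). i < j \<and> j < n \<and> \<sigma> j < \<sigma> i}"

text \<open>n x n complex matrices are represented as functions on index pairs;
  only entries with indices in {0..<n} matter.\<close>
definition per_z :: "nat \<Rightarrow> complex \<Rightarrow> (nat \<times> nat \<Rightarrow> complex) \<Rightarrow> complex" where
  "per_z n z X = (\<Sum>\<sigma> | \<sigma> permutes {..<n}.
                    z ^ inv_num n \<sigma> * (\<Prod>i<n. X (i, \<sigma> i)))"

definition per :: "nat \<Rightarrow> (nat \<times> nat \<Rightarrow> complex) \<Rightarrow> complex" where
  "per n X = per_z n 1 X"

definition cgauss :: "complex measure" where
  "cgauss = density lborel (\<lambda>w. ennreal (exp (- (cmod w)\<^sup>2) / pi))"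

definition gauss_mat :: "nat \<Rightarrow> (nat \<times> nat \<Rightarrow> complex) measure" where
  "gauss_mat n = PiM ({..<n} \<times> {..<n}) (\<lambda>_. cgauss)"

end

theory Submission
  imports Defs
begin

text \<open>Expanding \<open>|Per\<^sub>z(X)|\<^sup>2\<^sup>k = (Per\<^sub>z(X) conj(Per\<^sub>z(X)))\<^sup>k\<close> gives a sum, over pairs of
  \<open>k\<close>-tuples of permutations, of monomials in the entries of \<open>X\<close> and their conjugates, with
  coefficients of modulus 1 (products of powers of \<open>z\<close> and \<open>conj z\<close>); for \<open>z = 1\<close> all coefficients
  are 1. The entries are independent and their law is rotation invariant, so \<open>E[w\<^sup>a conj(w)\<^sup>b]\<close>
  vanishes for \<open>a \<noteq> b\<close> and equals \<open>E|w|\<^sup>2\<^sup>a \<ge> 0\<close> for \<open>a = b\<close>. Hence every monomial has a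
  nonnegative real expectation, and the triangle inequality bounds the expansion for \<open>z\<close> by the
  one for \<open>z = 1\<close>.\<close>

lemma (in pair_sigma_finite) integrable_mult_fst_snd:
  fixes f :: "'a \<Rightarrow> real" and g :: "'b \<Rightarrow> real"
  assumes f: "integrable M1 f" and g: "integrable M2 g"
  shows "integrable (M1 \<Otimes>\<^sub>M M2) (\<lambda>p. f (fst p) * g (snd p))"
proof (rule Fubini_integrable)
  show "(\<lambda>p. f (fst p) * g (snd p)) \<in> borel_measurable (M1 \<Otimes>\<^sub>M M2)"
    using f g by (auto dest: borel_measurable_integrable)
  have "(\<lambda>x. \<integral>y. norm (f (fst (x, y)) * g (snd (x, y))) \<partial>M2) = (\<lambda>x. norm (f x) * (\<integral>y. norm (g y) \<partial>M2))"
    by (simp add: norm_mult abs_mult)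
  then show "integrable M1 (\<lambda>x. \<integral>y. norm (f (fst (x, y)) * g (snd (x, y))) \<partial>M2)"
    using f by simp
  show "AE x in M1. integrable M2 (\<lambda>y. f (fst (x, y)) * g (snd (x, y)))"
    using g by simp
qed

lemma distr_lborel_pair_shear_fst:
  "distr (lborel \<Otimes>\<^sub>M lborel) (lborel \<Otimes>\<^sub>M lborel) (\<lambda>(x, y). (x + a * y, y :: real)) = lborel \<Otimes>\<^sub>M lborel"
  (is "distr ?P ?P ?S = ?P")
proof (rule measure_eqI)
  fix A assume "A \<in> sets (distr ?P ?P ?S)"
  then have A[measurable]: "A \<in> sets ?P" by simp
  have "emeasure (distr ?P ?P ?S) A = (\<integral>\<^sup>+p. indicator A p \<partial>distr ?P ?P ?S)"
    using A by (simp add: nn_integral_indicator)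
  also have "\<dots> = (\<integral>\<^sup>+p. indicator A (?S p) \<partial>?P)"
    by (simp add: nn_integral_distr)
  also have "\<dots> = (\<integral>\<^sup>+y. \<integral>\<^sup>+x. indicator A (x + a * y, y) \<partial>lborel \<partial>lborel)"
    by (subst lborel_pair.nn_integral_snd[symmetric]) (auto simp: case_prod_beta)
  also have "\<dots> = (\<integral>\<^sup>+y. \<integral>\<^sup>+x. indicator A (x, y) \<partial>lborel \<partial>lborel)"
    using nn_integral_real_affine[of "\<lambda>x. indicator A (x, _)" 1 "a * _"]
    by (simp add: add.commute)
  also have "\<dots> = emeasure ?P A"
    using A by (subst lborel_pair.nn_integral_snd) (auto simp: nn_integral_indicator)
  finally show "emeasure (distr ?P ?P ?S) A = emeasure ?P A" .
qed simp

lemma distr_lborel_pair_shear_snd: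
  "distr (lborel \<Otimes>\<^sub>M lborel) (lborel \<Otimes>\<^sub>M lborel) (\<lambda>(x, y). (x, y + b * x :: real)) = lborel \<Otimes>\<^sub>M lborel"
  (is "distr ?P ?P ?S = ?P")
proof -
  let ?swap = "\<lambda>(x :: real, y :: real). (y, x)"
  have "?S = ?swap \<circ> (\<lambda>(x, y). (x + b * y, y)) \<circ> ?swap"
    by auto
  then have "distr ?P ?P ?S = distr (distr (distr ?P ?P ?swap) ?P (\<lambda>(x, y). (x + b * y, y))) ?P ?swap"
    by (simp add: distr_distr comp_assoc)
  also have "\<dots> = ?P"
    by (simp add: lborel_pair.distr_pair_swap[symmetric] distr_lborel_pair_shear_fst)
  finally show ?thesis .
qed

lemma borel_measurable_Complex_pair [measurable]:
  "(\<lambda>(x, y). Complex x y) \<in> borel_measurable (lborel \<Otimes>\<^sub>M lborel)"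
  by (simp add: borel_measurable_complex_iff case_prod_beta')

lemma distr_lborel_pair_Complex:
  "distr (lborel \<Otimes>\<^sub>M lborel) borel (\<lambda>(x, y). Complex x y) = lborel"
proof (rule lborel_eqI[symmetric])
  fix l u :: complex
  assume le: "\<And>b. b \<in> Basis \<Longrightarrow> l \<bullet> b \<le> u \<bullet> b"
  then have "Re l \<le> Re u" "Im l \<le> Im u"
    using le[of 1] le[of \<i>] by (auto simp: Basis_complex_def inner_complex_def)
  moreover have "(\<lambda>(x, y). Complex x y) -` box l u \<inter> space (lborel \<Otimes>\<^sub>M lborel) = {Re l<..<Re u} \<times> {Im l<..<Im u}"
    by (auto simp: box_def Basis_complex_def inner_complex_def space_pair_measure)
  ultimately show "emeasure (distr (lborel \<Otimes>\<^sub>M lborel) borel (\<lambda>(x, y). Complex x y)) (box l u) = (\<Prod>b\<in>Basis. (u - l) \<bullet> b)"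
    by (simp add: emeasure_distr lborel.emeasure_pair_measure_Times Basis_complex_def inner_complex_def ennreal_mult)
qed simp

text \<open>With \<open>u = c + s\<i>\<close> and \<open>a = -s / (1 + c)\<close>, multiplication by \<open>u\<close> is the composition
  of the shears \<open>(x, y) \<mapsto> (x + a y, y)\<close>, \<open>(x, y) \<mapsto> (x, y + s x)\<close>, \<open>(x, y) \<mapsto> (x + a y, y)\<close>.\<close>

lemma mult_unit_Complex_eq_shears:
  assumes "cmod u = 1" "u \<noteq> -1"
  obtains a s where
    "\<And>x y. u * Complex x y = Complex (x + a * y + a * (y + s * (x + a * y))) (y + s * (x + a * y))"
proof
  define c s where "c = Re u" and "s = Im u"
  have "c\<^sup>2 + s\<^sup>2 = 1"
    using assms(1) by (simp add: c_def s_def cmod_def)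
  have "1 + c \<noteq> 0"
  proof
    assume "1 + c = 0"
    with \<open>c\<^sup>2 + s\<^sup>2 = 1\<close> have "s = 0"
      by (simp add: eq_neg_iff_add_eq_0[symmetric])
    with \<open>1 + c = 0\<close> assms(2) show False
      by (simp add: c_def s_def complex_eq_iff)
  qed
  define a where "a = - s / (1 + c)"
  have a: "1 + a * s = c" "a * (1 + c) = - s"
    using \<open>1 + c \<noteq> 0\<close> \<open>c\<^sup>2 + s\<^sup>2 = 1\<close>
    by (simp_all add: a_def field_simps power2_eq_square)
  fix x y :: real
  have "x + a * y + a * (y + s * (x + a * y)) = (1 + a * s) * x + a * (1 + (1 + a * s)) * y"
    by (simp add: algebra_simps)
  also have "\<dots> = c * x - s * y"
    using a by simp
  finally have re: "x + a * y + a * (y + s * (x + a * y)) = c * x - s * y" .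
  have "y + s * (x + a * y) = s * x + (1 + a * s) * y"
    by (simp add: algebra_simps)
  with a have im: "y + s * (x + a * y) = s * x + c * y"
    by simp
  show "u * Complex x y = Complex (x + a * y + a * (y + s * (x + a * y))) (y + s * (x + a * y))"
    unfolding re unfolding im by (simp add: c_def s_def complex_eq_iff algebra_simps)
qed

lemma lborel_distr_mult_unit_complex:
  fixes u :: complex
  assumes "cmod u = 1"
  shows "distr lborel borel (\<lambda>w. u * w) = lborel"
proof -
  have shears: "distr lborel borel (\<lambda>w. u * w) = lborel" if u: "cmod u = 1" "u \<noteq> -1" for u
  proof -
    obtain a s where shear:
      "\<And>x y. u * Complex x y = Complex (x + a * y + a * (y + s * (x + a * y))) (y + s * (x + a * y))"
      using mult_unit_Complex_eq_shears[OF u] by blast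
    let ?P = "lborel \<Otimes>\<^sub>M lborel :: (real \<times> real) measure"
    let ?Sx = "\<lambda>(x, y). (x + a * y, y :: real)" and ?Sy = "\<lambda>(x, y). (x, y + s * x :: real)"
    have "distr lborel borel (\<lambda>w. u * w) = distr (distr ?P borel (\<lambda>(x, y). Complex x y)) borel (\<lambda>w. u * w)"
      by (simp add: distr_lborel_pair_Complex)
    also have "\<dots> = distr (distr (distr (distr ?P ?P ?Sx) ?P ?Sy) ?P ?Sx) borel (\<lambda>(x, y). Complex x y)"
      by (simp add: distr_distr comp_def case_prod_beta shear)
    also have "\<dots> = lborel"
      by (simp add: distr_lborel_pair_shear_fst distr_lborel_pair_shear_snd distr_lborel_pair_Complex)
    finally show ?thesis .
  qed
  show ?thesis
  proof (cases "u = -1")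
    case True
    then have "distr lborel borel (\<lambda>w. u * w) = distr (distr lborel borel (\<lambda>w. \<i> * w)) borel (\<lambda>w. \<i> * w)"
      by (simp add: distr_distr comp_def)
    also have "\<dots> = lborel"
      using shears[of \<i>] by (simp add: complex_eq_iff)
    finally show ?thesis .
  qed (use assms shears in auto)
qed

definition cgauss_density :: "complex \<Rightarrow> real" where
  "cgauss_density w = exp (- (cmod w)\<^sup>2) / pi"

lemma borel_measurable_cgauss_density [measurable]: "cgauss_density \<in> borel_measurable borel"
  unfolding cgauss_density_def by measurable

lemma cgauss_eq_density: "cgauss = density lborel (\<lambda>w. ennreal (cgauss_density w))"
  unfolding cgauss_def cgauss_density_def ..

lemma sets_cgauss [simp, measurable_cong]: "sets cgauss = sets borel"
  by (simp add: cgauss_def)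

lemma space_cgauss [simp]: "space cgauss = UNIV"
  by (simp add: cgauss_def)

lemma cgauss_density_nonneg: "0 \<le> cgauss_density w"
  by (simp add: cgauss_density_def)

lemma cgauss_density_Complex_le:
  "cgauss_density (Complex x y) \<le> 2 * std_normal_density x * std_normal_density y"
proof -
  have "exp (- x\<^sup>2 - y\<^sup>2) \<le> exp (- x\<^sup>2 / 2 - y\<^sup>2 / 2)"
    using zero_le_power2[of x] zero_le_power2[of y] by (subst exp_le_cancel_iff) linarith
  then show ?thesis
    by (simp add: cgauss_density_def cmod_def std_normal_density_def exp_add[symmetric]
        divide_right_mono field_simps)
qed

lemma integrable_std_normal_one_plus_abs_power:
  "integrable lborel (\<lambda>x. std_normal_density x * (1 + \<bar>x\<bar>) ^ m)"
proof -
  have "(\<lambda>x. std_normal_density x * (1 + \<bar>x\<bar>) ^ m)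
      = (\<lambda>x. \<Sum>j\<le>m. of_nat (m choose j) * (std_normal_density x * \<bar>x\<bar> ^ j))"
    by (simp add: add.commute[of 1] binomial_ring sum_distrib_left mult_ac)
  then show ?thesis
    by (simp add: integrable_std_normal_moment_abs)
qed

lemma cgauss_density_Complex_mult_norm_power_le:
  "cgauss_density (Complex x y) * cmod (Complex x y) ^ m
    \<le> 2 * ((std_normal_density x * (1 + \<bar>x\<bar>) ^ m) * (std_normal_density y * (1 + \<bar>y\<bar>) ^ m))"
proof -
  have "cmod (Complex x y) \<le> \<bar>x\<bar> + \<bar>y\<bar>"
    using cmod_le[of "Complex x y"] by simp
  also have "\<dots> \<le> (1 + \<bar>x\<bar>) * (1 + \<bar>y\<bar>)"
    by (simp add: algebra_simps)
  finally have "cmod (Complex x y) ^ m \<le> (1 + \<bar>x\<bar>) ^ m * (1 + \<bar>y\<bar>) ^ m"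
    by (simp add: power_mono flip: power_mult_distrib)
  then have "cgauss_density (Complex x y) * cmod (Complex x y) ^ m
      \<le> (2 * std_normal_density x * std_normal_density y) * ((1 + \<bar>x\<bar>) ^ m * (1 + \<bar>y\<bar>) ^ m)"
    using cgauss_density_Complex_le[of x y] by (intro mult_mono) (simp_all add: cgauss_density_nonneg)
  then show ?thesis
    by (simp add: mult_ac)
qed

lemma integrable_cgauss_norm_power: "integrable cgauss (\<lambda>w. cmod w ^ m)"
proof -
  let ?F = "\<lambda>x. std_normal_density x * (1 + \<bar>x\<bar>) ^ m"
  have "integrable (lborel \<Otimes>\<^sub>M lborel) (\<lambda>p. 2 * (?F (fst p) * ?F (snd p)))"
    by (intro integrable_mult_right lborel_pair.integrable_mult_fst_snd
        integrable_std_normal_one_plus_abs_power)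
  then have "integrable (lborel \<Otimes>\<^sub>M lborel)
      (\<lambda>p. cgauss_density (Complex (fst p) (snd p)) * cmod (Complex (fst p) (snd p)) ^ m)"
    by (rule Bochner_Integration.integrable_bound)
      (auto simp: cgauss_density_nonneg cgauss_density_Complex_mult_norm_power_le)
  then have "integrable lborel (\<lambda>w. cgauss_density w * cmod w ^ m)"
    by (subst distr_lborel_pair_Complex[symmetric], subst integrable_distr_eq) (auto simp: case_prod_beta)
  then show ?thesis
    unfolding cgauss_eq_density by (subst integrable_density) (auto simp: cgauss_density_nonneg)
qed

interpretation cgauss: finite_measure cgauss
proof
  have "integrable cgauss (\<lambda>w. 1 :: real)"
    using integrable_cgauss_norm_power[of 0] by simp
  then show "emeasure cgauss (space cgauss) \<noteq> \<infinity>"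
    by (simp add: integrable_iff_bounded)
qed

lemma borel_measurable_cnj [measurable]: "cnj \<in> borel_measurable borel"
  by (simp add: borel_measurable_complex_iff)

lemma integrable_cgauss_mixed_moment: "integrable cgauss (\<lambda>w. w ^ a * cnj w ^ b)"
proof (rule Bochner_Integration.integrable_bound)
  show "integrable cgauss (\<lambda>w. cmod w ^ (a + b))"
    by (rule integrable_cgauss_norm_power)
  show "AE w in cgauss. norm (w ^ a * cnj w ^ b) \<le> norm (cmod w ^ (a + b))"
    by (simp add: norm_mult norm_power power_add)
qed measurable

lemma integral_cgauss_mult_unit:
  fixes f :: "complex \<Rightarrow> complex"
  assumes "cmod u = 1" and [measurable]: "f \<in> borel_measurable borel"
  shows "(\<integral>w. f (u * w) \<partial>cgauss) = (\<integral>w. f w \<partial>cgauss)"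
proof -
  have "(\<integral>w. f (u * w) \<partial>cgauss) = (\<integral>w. cgauss_density (u * w) *\<^sub>R f (u * w) \<partial>lborel)"
    using assms(1) by (simp add: cgauss_eq_density integral_density cgauss_density_nonneg)
      (simp add: cgauss_density_def norm_mult)
  also have "\<dots> = (\<integral>v. cgauss_density v *\<^sub>R f v \<partial>distr lborel borel (\<lambda>w. u * w))"
    by (simp add: integral_distr)
  also have "\<dots> = (\<integral>w. f w \<partial>cgauss)"
    using assms(1)
    by (simp add: lborel_distr_mult_unit_complex cgauss_eq_density integral_density cgauss_density_nonneg)
  finally show ?thesis .
qed

text \<open>Rotating by a \<open>u\<close> with \<open>u\<^sup>a conj(u)\<^sup>b = -1\<close> changes the sign of the moment.\<close>

lemma integral_cgauss_mixed_moment_eq_0: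
  assumes "a \<noteq> b"
  shows "(\<integral>w. w ^ a * cnj w ^ b \<partial>cgauss) = 0"
proof -
  define \<theta> where "\<theta> = pi / (real a - real b)"
  define u where "u = cis \<theta>"
  have "u ^ a * cnj u ^ b = cis (real a * \<theta>) * cis (real b * - \<theta>)"
    unfolding u_def cis_cnj Complex.DeMoivre by simp
  also have "\<dots> = cis ((real a - real b) * \<theta>)"
    by (simp add: cis_mult algebra_simps)
  also have "\<dots> = -1"
    using assms by (simp add: \<theta>_def)
  finally have u: "u ^ a * cnj u ^ b = -1" .
  let ?I = "\<integral>w. w ^ a * cnj w ^ b \<partial>cgauss"
  have "?I = (\<integral>w. (u * w) ^ a * cnj (u * w) ^ b \<partial>cgauss)"
    by (rule integral_cgauss_mult_unit[symmetric]) (simp_all add: u_def)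
  also have "\<dots> = - ?I"
    using u by (simp add: power_mult_distrib algebra_simps)
  finally show ?thesis
    by simp
qed

lemma integral_cgauss_mixed_moment_nonneg_Reals:
  "(\<integral>w. w ^ a * cnj w ^ b \<partial>cgauss) \<in> \<real>\<^sub>\<ge>\<^sub>0"
proof (cases "a = b")
  case True
  have "w ^ a * cnj w ^ a = complex_of_real (cmod w ^ (2 * a))" for w
    by (simp only: power_mult_distrib[symmetric] complex_norm_square[symmetric] power_mult of_real_power)
  then have "(\<integral>w. w ^ a * cnj w ^ a \<partial>cgauss) = complex_of_real (\<integral>w. cmod w ^ (2 * a) \<partial>cgauss)"
    by (simp only: integral_complex_of_real)
  then show ?thesis
    using True by simp
qed (simp add: integral_cgauss_mixed_moment_eq_0)

lemma nonneg_Reals_prod_I: "(\<And>x. x \<in> A \<Longrightarrow> f x \<in> \<real>\<^sub>\<ge>\<^sub>0) \<Longrightarrow> prod f A \<in> \<real>\<^sub>\<ge>\<^sub>0"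
  by (induction A rule: infinite_finite_induct) auto

lemma prod_comp_eq_prod_power_card:
  fixes f :: "'b \<Rightarrow> 'c::comm_monoid_mult"
  assumes "finite D" "finite T" "g ` D \<subseteq> T"
  shows "(\<Prod>x\<in>D. f (g x)) = (\<Prod>e\<in>T. f e ^ card {x \<in> D. g x = e})"
proof -
  have "(\<Prod>x\<in>D. f (g x)) = (\<Prod>e\<in>T. \<Prod>x\<in>{x \<in> D. g x = e}. f (g x))"
    using assms by (rule prod.group[symmetric])
  also have "\<dots> = (\<Prod>e\<in>T. f e ^ card {x \<in> D. g x = e})"
    by (intro prod.cong refl) simp
  finally show ?thesis .
qed

interpretation cgauss_product: product_sigma_finite "\<lambda>_. cgauss"
  by unfold_locales

lemma
  fixes p :: "'d \<Rightarrow> 'i" and q :: "'e \<Rightarrow> 'i"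
  assumes "finite I" "finite D" "finite E" "p ` D \<subseteq> I" "q ` E \<subseteq> I"
  shows integrable_PiM_cgauss_monomial:
      "integrable (PiM I (\<lambda>_. cgauss)) (\<lambda>X. (\<Prod>x\<in>D. X (p x)) * (\<Prod>y\<in>E. cnj (X (q y))))"
    and integral_PiM_cgauss_monomial_nonneg_Reals:
      "(\<integral>X. (\<Prod>x\<in>D. X (p x)) * (\<Prod>y\<in>E. cnj (X (q y))) \<partial>PiM I (\<lambda>_. cgauss)) \<in> \<real>\<^sub>\<ge>\<^sub>0"
proof -
  define a where "a e = card {x \<in> D. p x = e}" for e
  define b where "b e = card {y \<in> E. q y = e}" for e
  have eq: "(\<Prod>x\<in>D. X (p x)) * (\<Prod>y\<in>E. cnj (X (q y))) = (\<Prod>e\<in>I. X e ^ a e * cnj (X e) ^ b e)" for X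
    using assms unfolding a_def b_def
    by (simp add: prod_comp_eq_prod_power_card[of D I p X]
        prod_comp_eq_prod_power_card[of E I q "\<lambda>e. cnj (X e)"] prod.distrib)
  show "integrable (PiM I (\<lambda>_. cgauss)) (\<lambda>X. (\<Prod>x\<in>D. X (p x)) * (\<Prod>y\<in>E. cnj (X (q y))))"
    unfolding eq using \<open>finite I\<close>
    by (rule cgauss_product.product_integrable_prod) (rule integrable_cgauss_mixed_moment)
  have "(\<integral>X. (\<Prod>x\<in>D. X (p x)) * (\<Prod>y\<in>E. cnj (X (q y))) \<partial>PiM I (\<lambda>_. cgauss))
      = (\<Prod>e\<in>I. \<integral>w. w ^ a e * cnj w ^ b e \<partial>cgauss)"
    unfolding eq using \<open>finite I\<close>
    by (rule cgauss_product.product_integral_prod) (rule integrable_cgauss_mixed_moment)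
  then show "(\<integral>X. (\<Prod>x\<in>D. X (p x)) * (\<Prod>y\<in>E. cnj (X (q y))) \<partial>PiM I (\<lambda>_. cgauss)) \<in> \<real>\<^sub>\<ge>\<^sub>0"
    by (simp add: nonneg_Reals_prod_I integral_cgauss_mixed_moment_nonneg_Reals)
qed

lemma norm_sum_power_eq_sum_PiE:
  fixes f :: "'b \<Rightarrow> complex"
  assumes "finite S"
  shows "complex_of_real (norm (\<Sum>\<sigma>\<in>S. f \<sigma>) ^ (2 * k))
    = (\<Sum>s\<in>PiE {..<k} (\<lambda>_. S). \<Sum>t\<in>PiE {..<k} (\<lambda>_. S). \<Prod>j<k. f (s j) * cnj (f (t j)))"
proof -
  have "complex_of_real (norm (\<Sum>\<sigma>\<in>S. f \<sigma>) ^ (2 * k)) = ((\<Sum>\<sigma>\<in>S. f \<sigma>) * cnj (\<Sum>\<sigma>\<in>S. f \<sigma>)) ^ k"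
    by (metis complex_norm_square of_real_power power_mult)
  also have "\<dots> = (\<Prod>j<k. \<Sum>\<sigma>\<in>S. f \<sigma>) * (\<Prod>j<k. \<Sum>\<sigma>\<in>S. cnj (f \<sigma>))"
    by (simp add: power_mult_distrib)
  also have "\<dots> = (\<Sum>s\<in>PiE {..<k} (\<lambda>_. S). \<Prod>j<k. f (s j)) * (\<Sum>t\<in>PiE {..<k} (\<lambda>_. S). \<Prod>j<k. cnj (f (t j)))"
    using assms prod_sum_PiE[of "{..<k}" "\<lambda>_. S" "\<lambda>_ \<sigma>. f \<sigma>"]
      prod_sum_PiE[of "{..<k}" "\<lambda>_. S" "\<lambda>_ \<sigma>. cnj (f \<sigma>)"] by simp
  also have "\<dots> = (\<Sum>s\<in>PiE {..<k} (\<lambda>_. S). \<Sum>t\<in>PiE {..<k} (\<lambda>_. S). \<Prod>j<k. f (s j) * cnj (f (t j)))"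
    by (simp add: sum_product prod.distrib)
  finally show ?thesis .
qed

text \<open>Both sides expand into the same mixed moments of the \<open>g\<^sub>\<sigma>\<close>, with coefficients of modulus
  at most 1 on the left and equal to 1 on the right; compare termwise by the triangle inequality.\<close>

lemma integral_norm_weighted_sum_power_le:
  fixes S :: "'b set" and k :: nat and w :: "'b \<Rightarrow> complex" and g :: "'b \<Rightarrow> 'a \<Rightarrow> complex"
  defines "K \<equiv> PiE {..<k} (\<lambda>_. S)"
  assumes "finite S" and w: "\<And>\<sigma>. \<sigma> \<in> S \<Longrightarrow> cmod (w \<sigma>) \<le> 1"
    and integrable: "\<And>s t. s \<in> K \<Longrightarrow> t \<in> K \<Longrightarrow>
      integrable M (\<lambda>X. \<Prod>j<k. g (s j) X * cnj (g (t j) X))"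
    and nonneg: "\<And>s t. s \<in> K \<Longrightarrow> t \<in> K \<Longrightarrow>
      (\<integral>X. (\<Prod>j<k. g (s j) X * cnj (g (t j) X)) \<partial>M) \<in> \<real>\<^sub>\<ge>\<^sub>0"
  shows "(\<integral>X. norm (\<Sum>\<sigma>\<in>S. w \<sigma> * g \<sigma> X) ^ (2 * k) \<partial>M) \<le> (\<integral>X. norm (\<Sum>\<sigma>\<in>S. g \<sigma> X) ^ (2 * k) \<partial>M)"
proof -
  define J where "J s t = (\<integral>X. (\<Prod>j<k. g (s j) X * cnj (g (t j) X)) \<partial>M)" for s t
  define c where "c v s t = (\<Prod>j<k. v (s j) * cnj (v (t j)))" for v :: "'b \<Rightarrow> complex" and s t
  have expand: "complex_of_real (\<integral>X. norm (\<Sum>\<sigma>\<in>S. v \<sigma> * g \<sigma> X) ^ (2 * k) \<partial>M)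
      = (\<Sum>s\<in>K. \<Sum>t\<in>K. c v s t * J s t)" for v
  proof -
    have "complex_of_real (norm (\<Sum>\<sigma>\<in>S. v \<sigma> * g \<sigma> X) ^ (2 * k))
        = (\<Sum>s\<in>K. \<Sum>t\<in>K. c v s t * (\<Prod>j<k. g (s j) X * cnj (g (t j) X)))" for X
      unfolding norm_sum_power_eq_sum_PiE[OF \<open>finite S\<close>] K_def c_def
      by (simp add: prod.distrib[symmetric] mult_ac)
    then have "complex_of_real (\<integral>X. norm (\<Sum>\<sigma>\<in>S. v \<sigma> * g \<sigma> X) ^ (2 * k) \<partial>M)
        = (\<integral>X. (\<Sum>s\<in>K. \<Sum>t\<in>K. c v s t * (\<Prod>j<k. g (s j) X * cnj (g (t j) X))) \<partial>M)"
      by (simp flip: integral_complex_of_real)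
    also have "\<dots> = (\<Sum>s\<in>K. \<Sum>t\<in>K. c v s t * J s t)"
      using integrable by (simp add: J_def Bochner_Integration.integral_sum Bochner_Integration.integrable_sum)
    finally show ?thesis .
  qed
  have "(\<integral>X. norm (\<Sum>\<sigma>\<in>S. w \<sigma> * g \<sigma> X) ^ (2 * k) \<partial>M)
      \<le> cmod (complex_of_real (\<integral>X. norm (\<Sum>\<sigma>\<in>S. w \<sigma> * g \<sigma> X) ^ (2 * k) \<partial>M))"
    by simp
  also have "\<dots> = cmod (\<Sum>s\<in>K. \<Sum>t\<in>K. c w s t * J s t)"
    unfolding expand ..
  also have "\<dots> \<le> (\<Sum>s\<in>K. cmod (\<Sum>t\<in>K. c w s t * J s t))"
    by (rule norm_sum)
  also have "\<dots> \<le> (\<Sum>s\<in>K. \<Sum>t\<in>K. cmod (c w s t) * cmod (J s t))"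
    by (intro sum_mono order.trans[OF norm_sum]) (simp add: norm_mult)
  also have "\<dots> \<le> (\<Sum>s\<in>K. \<Sum>t\<in>K. Re (J s t))"
  proof (intro sum_mono)
    fix s t assume "s \<in> K" "t \<in> K"
    then have "cmod (w (s j)) * cmod (w (t j)) \<le> 1" if "j < k" for j
      using that by (intro mult_le_one w) (auto simp: K_def PiE_mem)
    then have "cmod (c w s t) \<le> 1"
      unfolding c_def prod_norm[symmetric] norm_mult complex_mod_cnj
      by (intro prod_le_1) simp
    then show "cmod (c w s t) * cmod (J s t) \<le> Re (J s t)"
      using nonneg[OF \<open>s \<in> K\<close> \<open>t \<in> K\<close>]
      by (simp add: J_def nonneg_Reals_cmod_eq_Re complex_nonneg_Reals_iff mult_left_le_one_le)
  qed
  also have "\<dots> = Re (complex_of_real (\<integral>X. norm (\<Sum>\<sigma>\<in>S. 1 * g \<sigma> X) ^ (2 * k) \<partial>M))"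
    unfolding expand by (simp add: c_def)
  also have "\<dots> = (\<integral>X. norm (\<Sum>\<sigma>\<in>S. g \<sigma> X) ^ (2 * k) \<partial>M)"
    by simp
  finally show ?thesis .
qed

lemma
  fixes n k :: nat
  assumes "s \<in> PiE {..<k} (\<lambda>_. {\<sigma>. \<sigma> permutes {..<n}})" "t \<in> PiE {..<k} (\<lambda>_. {\<sigma>. \<sigma> permutes {..<n}})"
  shows integrable_gauss_mat_permutation_products:
      "integrable (gauss_mat n) (\<lambda>X. \<Prod>j<k. (\<Prod>i<n. X (i, s j i)) * cnj (\<Prod>i<n. X (i, t j i)))"
    and integral_gauss_mat_permutation_products_nonneg_Reals:
      "(\<integral>X. (\<Prod>j<k. (\<Prod>i<n. X (i, s j i)) * cnj (\<Prod>i<n. X (i, t j i))) \<partial>gauss_mat n) \<in> \<real>\<^sub>\<ge>\<^sub>0"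
proof -
  define p where "p x = (snd x, s (fst x) (snd x))" for x
  define q where "q x = (snd x, t (fst x) (snd x))" for x
  have eq: "(\<Prod>j<k. (\<Prod>i<n. X (i, s j i)) * cnj (\<Prod>i<n. X (i, t j i)))
      = (\<Prod>x\<in>{..<k} \<times> {..<n}. X (p x)) * (\<Prod>x\<in>{..<k} \<times> {..<n}. cnj (X (q x)))" for X
    by (simp add: p_def q_def prod.distrib prod.cartesian_product case_prod_beta)
  have "s j i < n" "t j i < n" if "j < k" "i < n" for i j
    using PiE_mem[OF assms(1), of j] PiE_mem[OF assms(2), of j] that
      permutes_in_image[of "s j" "{..<n}" i] permutes_in_image[of "t j" "{..<n}" i]
    by auto
  then have img: "p ` ({..<k} \<times> {..<n}) \<subseteq> {..<n} \<times> {..<n}" "q ` ({..<k} \<times> {..<n}) \<subseteq> {..<n} \<times> {..<n}"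
    by (auto simp: p_def q_def)
  show "integrable (gauss_mat n) (\<lambda>X. \<Prod>j<k. (\<Prod>i<n. X (i, s j i)) * cnj (\<Prod>i<n. X (i, t j i)))"
    unfolding eq gauss_mat_def using img by (intro integrable_PiM_cgauss_monomial) auto
  show "(\<integral>X. (\<Prod>j<k. (\<Prod>i<n. X (i, s j i)) * cnj (\<Prod>i<n. X (i, t j i))) \<partial>gauss_mat n) \<in> \<real>\<^sub>\<ge>\<^sub>0"
    unfolding eq gauss_mat_def using img by (intro integral_PiM_cgauss_monomial_nonneg_Reals) auto
qed

theorem mainTheorem17:
  fixes n k :: nat and z :: complex
  assumes "cmod z = 1" and "k \<ge> 2"
  shows "(\<integral>X. (cmod (per_z n z X)) ^ (2 * k) \<partial>gauss_mat n)
           \<le> (\<integral>X. (cmod (per n X)) ^ (2 * k) \<partial>gauss_mat n)"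
proof -
  have per_eq: "per n = (\<lambda>X. \<Sum>\<sigma> | \<sigma> permutes {..<n}. \<Prod>i<n. X (i, \<sigma> i))"
    by (simp add: fun_eq_iff per_def per_z_def)
  show ?thesis
    unfolding per_z_def per_eq
  proof (rule integral_norm_weighted_sum_power_le)
    show "finite {\<sigma>. \<sigma> permutes {..<n}}"
      by (simp add: finite_permutations)
    show "cmod (z ^ inv_num n \<sigma>) \<le> 1" for \<sigma>
      using assms(1) by (simp add: norm_power)
  qed (fact integrable_gauss_mat_permutation_products integral_gauss_mat_permutation_products_nonneg_Reals)+
qed

end
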